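(* Let $X\subset\mathbb{R}^n$ be finite, $\epsilon\ge0$, and $\sigma$ a degree-compatible term ordering, and run the ABM algorithm with gradient-weighted normalization (described in the context) on $(X,\epsilon,\sigma)$. Then at every point during the run: (1) no polynomial $h\in\mathrm{Span}(\mathcal{O})$ (for the current set $\mathcal{O}$) with $\|h\|_{\mathrm{gw},X}=1$ is $\epsilon$-approximately vanishing for $X$; (2) each polynomial $g=v_1b+v_2o_1+\cdots+v_{s+1}o_s$ formed in step S3 satisfies $\|g\|_{\mathrm{gw},X}=1$, has nonzero coefficient $v_1$ on $b$, and is $\sqrt{\lambda_{\min}}$-approximately vanishing for $X$, i.e. $\|g(X)\|\le\sqrt{\lambda_{\min}}$.
   Context: For $X=\{\mathbf{x}_1,\ldots,\mathbf{x}_N\}$ and a polynomial $h$, $h(X)=(h(\mathbf{x}_1),\ldots,h(\mathbf{x}_N))^\top$; $\|\cdot\|$ is the Euclidean norm. A polynomial $g$ is $\epsilon$-approximately vanishing for $X$ if $\|g(X)\|\le\epsilon$. Gradient norm: $\|g\|_{g,X}=\sqrt{\sum_{\mathbf{x}\in X}\|\nabla g(\mathbf{x})\|^2}/\sqrt{\sum_{k=1}^n\deg_k(g)^2}$, and $0$ for constant $g$. Gradient-weighted norm of $g=\sum_ic_it_i$ (distinct terms $t_i$): $\|g\|_{\mathrm{gw},X}=\sqrt{\sum_ic_i^2\|t_i\|_{g,X}^2}$; $g$ is gradient-weighted unitary if this equals $1$. $\mathrm{Span}(\cdot)$ is the real linear span. The border of a set of terms $\mathcal{O}$ is $\partial\mathcal{O}=(\bigcup_k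 x_k\mathcal{O})\setminus\mathcal{O}$. ABM algorithm with gradient-weighted normalization, input $(X,\epsilon,\sigma)$: initialize $G=\emptyset$, $\mathcal{O}=\{1\}$. For $d=1,2,\ldots$: set $L=\{b\in\partial\mathcal{O}:\deg b=d\}$; if $L=\emptyset$, output $(\mathcal{O},G)$ and stop. Otherwise repeat until $L$ is empty: (S1) take the $\sigma$-smallest $b\in L$ and remove it from $L$; (S2) with current $\mathcal{O}=\{o_1,\ldots,o_s\}$, let $M=(b(X)\ o_1(X)\ \cdots\ o_s(X))$ and $D=\mathrm{diag}(\|b\|_{\mathrm{gw},X},\|o_1\|_{\mathrm{gw},X},\ldots,\|o_s\|_{\mathrm{gw},X})$, and compute the smallest generalized eigenvalue $\lambda_{\min}$ and a corresponding generalized eigenvector $\mathbf{v}_{\min}=(v_1,\ldots,v_{s+1})^\top$ of $M^\top M\mathbf{v}=\lambda D^2\mathbf{v}$, normalized by $\mathbf{v}_{\min}^\top D^2\mathbf{v}_{\min}=1$; (S3) if $\sqrt{\lambda_{\min}}\le\epsilon$, add $g=v_1b+v_2o_1+\cdots+v_{s+1}o_s$ to $G$; otherwise add $b$ to $\mathcal{O}$. *)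

theory Defs
  imports "HOL-Analysis.Analysis"
begin

text \<open>Terms (monomials) in the variables indexed by the finite type 'n are exponent
  vectors; points of X are vectors in real^'n. Polynomials are coefficient functions
  from terms to reals (with finite support).\<close>

type_synonym 'n "term" = "'n \<Rightarrow> nat"
type_synonym 'n polyn = "'n term \<Rightarrow> real"

definition one_term :: "'n term" where
  "one_term = (\<lambda>k. 0)"

definition tdeg :: "('n::finite) term \<Rightarrow> nat" where
  "tdeg t = (\<Sum>k\<in>UNIV. t k)"

definition term_eval :: "('n::finite) term \<Rightarrow> real^'n \<Rightarrow> real" where
  "term_eval t x = (\<Prod>k\<in>UNIV. (x $ k) ^ (t k))"

definition partial_deriv :: "(real^'n \<Rightarrow> real) \<Rightarrow> 'n \<Rightarrow> real^'n \<Rightarrow> real" where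
  "partial_deriv f k x = deriv (\<lambda>s. f (x + s *\<^sub>R axis k 1)) 0"

definition grad_norm_sq :: "('n::finite) term \<Rightarrow> real^'n \<Rightarrow> real" where
  "grad_norm_sq t x = (\<Sum>k\<in>UNIV. (partial_deriv (term_eval t) k x)^2)"

definition term_gnorm :: "(real^'n) set \<Rightarrow> ('n::finite) term \<Rightarrow> real" where
  "term_gnorm X t =
     (if tdeg t = 0 then 0
      else sqrt (\<Sum>x\<in>X. grad_norm_sq t x) / sqrt (\<Sum>k\<in>UNIV. (real (t k))^2))"

definition poly_support :: "'n polyn \<Rightarrow> 'n term set" where
  "poly_support c = {t. c t \<noteq> 0}"

definition poly_eval :: "('n::finite) polyn \<Rightarrow> real^'n \<Rightarrow> real" where
  "poly_eval c x = (\<Sum>t\<in>poly_support c. c t * term_eval t x)"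

definition eval_norm :: "(real^'n) set \<Rightarrow> ('n::finite) polyn \<Rightarrow> real" where
  "eval_norm X c = sqrt (\<Sum>x\<in>X. (poly_eval c x)^2)"

definition approx_vanishing :: "(real^'n) set \<Rightarrow> real \<Rightarrow> ('n::finite) polyn \<Rightarrow> bool" where
  "approx_vanishing X eps c \<longleftrightarrow> eval_norm X c \<le> eps"

definition gw_norm :: "(real^'n) set \<Rightarrow> ('n::finite) polyn \<Rightarrow> real" where
  "gw_norm X c = sqrt (\<Sum>t\<in>poly_support c. (c t)^2 * (term_gnorm X t)^2)"

definition monom :: "'n term \<Rightarrow> 'n polyn" where
  "monom t = (\<lambda>s. if s = t then 1 else 0)"

definition poly_span :: "'n term set \<Rightarrow> 'n polyn set" where
  "poly_span Os = {c. \<forall>t. c t \<noteq> 0 \<longrightarrow> t \<in> Os}"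

definition mult_var :: "'n \<Rightarrow> 'n term \<Rightarrow> 'n term" where
  "mult_var k t = t(k := Suc (t k))"

definition border :: "'n term set \<Rightarrow> 'n term set" where
  "border Os = (\<Union>k. mult_var k ` Os) - Os"

definition term_ordering :: "('n term \<Rightarrow> 'n term \<Rightarrow> bool) \<Rightarrow> bool" where
  "term_ordering ordl \<longleftrightarrow>
     (\<forall>a. \<not> ordl a a) \<and>
     (\<forall>a b c. ordl a b \<longrightarrow> ordl b c \<longrightarrow> ordl a c) \<and>
     (\<forall>a b. a \<noteq> b \<longrightarrow> ordl a b \<or> ordl b a) \<and>
     (\<forall>t. t \<noteq> one_term \<longrightarrow> ordl one_term t) \<and>
     (\<forall>a b c. ordl a b \<longrightarrow> ordl (\<lambda>k. a k + c k) (\<lambda>k. b k + c k))"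

definition degree_compatible :: "(('n::finite) term \<Rightarrow> 'n term \<Rightarrow> bool) \<Rightarrow> bool" where
  "degree_compatible ordl \<longleftrightarrow> (\<forall>a b. tdeg a < tdeg b \<longrightarrow> ordl a b)"

text \<open>Step S2: B = {b} \<union> Os indexes the columns of M; (M^T M) w = lam D^2 w written
  componentwise, with D the diagonal of gradient-weighted norms of the terms.\<close>
definition gen_eig_eq ::
  "(real^'n) set \<Rightarrow> ('n::finite) term set \<Rightarrow> 'n term \<Rightarrow> real \<Rightarrow> 'n polyn \<Rightarrow> bool" where
  "gen_eig_eq X Os b lam w \<longleftrightarrow>
     (\<forall>t. t \<notin> insert b Os \<longrightarrow> w t = 0) \<and>
     (\<forall>t\<in>insert b Os.
        (\<Sum>t'\<in>insert b Os. (\<Sum>x\<in>X. term_eval t x * term_eval t' x) * w t')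
          = lam * (gw_norm X (monom t))^2 * w t)"

definition gen_eigenvalue ::
  "(real^'n) set \<Rightarrow> ('n::finite) term set \<Rightarrow> 'n term \<Rightarrow> real \<Rightarrow> bool" where
  "gen_eigenvalue X Os b lam \<longleftrightarrow>
     (\<exists>w. gen_eig_eq X Os b lam w \<and> (\<exists>t\<in>insert b Os. w t \<noteq> 0))"

text \<open>(lam, v) is a valid outcome of step S2: lam is the smallest generalized eigenvalue
  and v a corresponding generalized eigenvector with v^T D^2 v = 1.\<close>
definition abm_S2 ::
  "(real^'n) set \<Rightarrow> ('n::finite) term set \<Rightarrow> 'n term \<Rightarrow> real \<Rightarrow> 'n polyn \<Rightarrow> bool" where
  "abm_S2 X Os b lam v \<longleftrightarrow>
     gen_eigenvalue X Os b lam \<and> (\<forall>mu. gen_eigenvalue X Os b mu \<longrightarrow> lam \<le> mu) \<and>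
     gen_eig_eq X Os b lam v \<and>
     (\<Sum>t\<in>insert b Os. (gw_norm X (monom t))^2 * (v t)^2) = 1"

text \<open>States: (d, L, Os, G, stopped).\<close>
type_synonym 'n abm_state = "nat \<times> 'n term set \<times> 'n term set \<times> 'n polyn set \<times> bool"

definition abm_init :: "'n abm_state" where
  "abm_init = (0, {}, {one_term}, {}, False)"

inductive abm_step ::
  "(real^'n) set \<Rightarrow> real \<Rightarrow> (('n::finite) term \<Rightarrow> 'n term \<Rightarrow> bool)
     \<Rightarrow> 'n abm_state \<Rightarrow> 'n abm_state \<Rightarrow> bool"
  for X eps ordl where
  next_degree:
    "{b\<in>border Os. tdeg b = Suc d} \<noteq> {} \<Longrightarrow>
     abm_step X eps ordl (d, {}, Os, G, False)
       (Suc d, {b\<in>border Os. tdeg b = Suc d}, Os, G, False)"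
| stop:
    "{b\<in>border Os. tdeg b = Suc d} = {} \<Longrightarrow>
     abm_step X eps ordl (d, {}, Os, G, False) (d, {}, Os, G, True)"
| process:
    "b \<in> L \<Longrightarrow> (\<forall>b'\<in>L. b' \<noteq> b \<longrightarrow> ordl b b') \<Longrightarrow> abm_S2 X Os b lam v \<Longrightarrow>
     abm_step X eps ordl (d, L, Os, G, False)
       (d, L - {b},
        if sqrt lam \<le> eps then Os else insert b Os,
        if sqrt lam \<le> eps then insert v G else G, False)"

definition abm_reachable ::
  "(real^'n) set \<Rightarrow> real \<Rightarrow> (('n::finite) term \<Rightarrow> 'n term \<Rightarrow> bool) \<Rightarrow> 'n abm_state \<Rightarrow> bool" where
  "abm_reachable X eps ordl s \<longleftrightarrow> (abm_step X eps ordl)\<^sup>*\<^sup>* abm_init s"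

end

(*
  Write a polynomial supported on the terms B = O u {b} as its coefficient vector w.
  Then ||h(X)||^2 = w^T M^T M w and ||h||_gw^2 = w^T D^2 w are two positive semidefinite
  quadratic forms, and step S2 solves the pencil M^T M w = lambda D^2 w.  The generalized
  Rayleigh principle w^T M^T M w >= lambda_min w^T D^2 w still holds although D is singular
  (the constant term has gradient norm 0): minimise the ratio
  w^T M^T M w / (w^T M^T M w + w^T D^2 w) over the unit sphere, which is defined because a
  common null vector of both forms would be an eigenvector for every lambda, and note that a
  minimiser is an eigenvector.  So when b enters O (sqrt lambda_min > eps), every
  gradient-weighted unitary h in the new span has ||h(X)|| >= sqrt lambda_min > eps, which
  proves (1) by induction over the run.  For the eigenvector v itself equality holds, and
  v_1 = 0 would put v into Span(O), contradicting (1).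
*)
theory Submission
  imports Defs
begin

text \<open>Coefficient vectors \<open>w\<close> live on a finite index set \<open>B\<close>; the columns of \<open>M\<close> are the
  functions \<open>e t\<close> sampled on \<open>X\<close>, so \<open>gram_form X B e w = w\<^sup>T M\<^sup>T M w\<close>, and
  \<open>diag_form B \<beta> w = w\<^sup>T D\<^sup>2 w\<close> with \<open>D\<^sup>2 = diag \<beta>\<close>.\<close>

definition vecs_on :: "'a set \<Rightarrow> ('a \<Rightarrow> real) set" where
  "vecs_on B = {w. \<forall>t. t \<notin> B \<longrightarrow> w t = 0}"

definition lin_comb :: "'a set \<Rightarrow> ('a \<Rightarrow> 'x \<Rightarrow> real) \<Rightarrow> ('a \<Rightarrow> real) \<Rightarrow> 'x \<Rightarrow> real" where
  "lin_comb B e w x = (\<Sum>t\<in>B. w t * e t x)"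

definition gram_form :: "'x set \<Rightarrow> 'a set \<Rightarrow> ('a \<Rightarrow> 'x \<Rightarrow> real) \<Rightarrow> ('a \<Rightarrow> real) \<Rightarrow> real" where
  "gram_form X B e w = (\<Sum>x\<in>X. (lin_comb B e w x)\<^sup>2)"

definition diag_form :: "'a set \<Rightarrow> ('a \<Rightarrow> real) \<Rightarrow> ('a \<Rightarrow> real) \<Rightarrow> real" where
  "diag_form B \<beta> w = (\<Sum>t\<in>B. \<beta> t * (w t)\<^sup>2)"

definition pencil_eigvec ::
  "'x set \<Rightarrow> 'a set \<Rightarrow> ('a \<Rightarrow> 'x \<Rightarrow> real) \<Rightarrow> ('a \<Rightarrow> real) \<Rightarrow> real \<Rightarrow> ('a \<Rightarrow> real) \<Rightarrow> bool" where
  "pencil_eigvec X B e \<beta> \<mu> w \<longleftrightarrow> w \<in> vecs_on B \<and> (\<exists>t\<in>B. w t \<noteq> 0) \<and>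
     (\<forall>t\<in>B. (\<Sum>x\<in>X. e t x * lin_comb B e w x) = \<mu> * \<beta> t * w t)"

lemma gram_form_nonneg: "0 \<le> gram_form X B e w"
  by (simp add: gram_form_def sum_nonneg)

lemma diag_form_nonneg: "(\<And>t. t \<in> B \<Longrightarrow> 0 \<le> \<beta> t) \<Longrightarrow> 0 \<le> diag_form B \<beta> w"
  by (simp add: diag_form_def sum_nonneg)

lemma lin_comb_add_scaled:
  "lin_comb B e (\<lambda>t. w t + s * u t) x = lin_comb B e w x + s * lin_comb B e u x"
  by (simp add: lin_comb_def algebra_simps sum.distrib sum_distrib_left)

lemma gram_form_scale: "gram_form X B e (\<lambda>t. c * w t) = c\<^sup>2 * gram_form X B e w"
proof -
  have "lin_comb B e (\<lambda>t. c * w t) x = c * lin_comb B e w x" for x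
    by (simp add: lin_comb_def sum_distrib_left mult.assoc)
  then show ?thesis
    by (simp add: gram_form_def sum_distrib_left power_mult_distrib)
qed

lemma diag_form_scale: "diag_form B \<beta> (\<lambda>t. c * w t) = c\<^sup>2 * diag_form B \<beta> w"
  by (simp add: diag_form_def sum_distrib_left power_mult_distrib mult_ac)

lemma gram_form_add_scaled:
  "gram_form X B e (\<lambda>t. w t + s * u t) = gram_form X B e w
     + 2 * s * (\<Sum>x\<in>X. lin_comb B e w x * lin_comb B e u x) + s\<^sup>2 * gram_form X B e u"
  by (simp add: gram_form_def lin_comb_add_scaled power2_sum power_mult_distrib
      sum.distrib sum_distrib_left mult_ac)

lemma diag_form_add_scaled:
  "diag_form B \<beta> (\<lambda>t. w t + s * u t) = diag_form B \<beta> w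
     + 2 * s * (\<Sum>t\<in>B. \<beta> t * w t * u t) + s\<^sup>2 * diag_form B \<beta> u"
  by (simp add: diag_form_def power2_sum sum.distrib sum_distrib_left power_mult_distrib
      algebra_simps)

lemma lin_comb_delta:
  assumes "finite B" "t0 \<in> B"
  shows "lin_comb B e (\<lambda>t. if t = t0 then 1 else 0) x = e t0 x"
proof -
  have "lin_comb B e (\<lambda>t. if t = t0 then 1 else 0) x = (\<Sum>t\<in>B. if t = t0 then e t x else 0)"
    unfolding lin_comb_def by (rule sum.cong) auto
  then show ?thesis
    using assms by simp
qed

lemma gram_form_eq_bilinear:
  "gram_form X B e w = (\<Sum>t\<in>B. w t * (\<Sum>x\<in>X. e t x * lin_comb B e w x))"
proof -
  have "(\<Sum>t\<in>B. w t * (\<Sum>x\<in>X. e t x * lin_comb B e w x))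
      = (\<Sum>x\<in>X. \<Sum>t\<in>B. w t * e t x * lin_comb B e w x)"
    by (simp add: sum_distrib_left mult.assoc sum.swap[of _ B X])
  also have "\<dots> = gram_form X B e w"
    by (simp add: gram_form_def lin_comb_def power2_eq_square sum_distrib_right)
  finally show ?thesis ..
qed

lemma gram_form_pencil_eigvec:
  "pencil_eigvec X B e \<beta> \<mu> w \<Longrightarrow> gram_form X B e w = \<mu> * diag_form B \<beta> w"
  unfolding gram_form_eq_bilinear pencil_eigvec_def diag_form_def
  by (simp add: sum_distrib_left power2_eq_square mult_ac)

lemma pencil_eigvec_if_degenerate:
  assumes "finite X" "finite B" "\<And>t. t \<in> B \<Longrightarrow> 0 \<le> \<beta> t"
    and "w \<in> vecs_on B" "\<exists>t\<in>B. w t \<noteq> 0"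
    and "gram_form X B e w = 0" "diag_form B \<beta> w = 0"
  shows "pencil_eigvec X B e \<beta> \<mu> w"
proof -
  have "\<forall>x\<in>X. lin_comb B e w x = 0"
    using assms(1,6) by (simp add: gram_form_def sum_nonneg_eq_0_iff)
  moreover have "\<forall>t\<in>B. \<beta> t * w t = 0"
    using assms(2,3,7) by (simp add: diag_form_def sum_nonneg_eq_0_iff)
  ultimately show ?thesis
    using assms(4,5) by (simp add: pencil_eigvec_def)
qed

lemma compact_unit_vecs_on:
  assumes "finite B"
  shows "compact (vecs_on B \<inter> {w. (\<Sum>t\<in>B. (w t)\<^sup>2) = 1})"
proof -
  define S where "S = (\<lambda>t. if t \<in> B then {-1..1} else {0::real})"
  have "compactin (product_topology (\<lambda>_. euclidean) UNIV) (PiE UNIV S)"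
    by (simp add: compactin_PiE S_def compactin_euclidean_iff)
  then have "compact (PiE UNIV S)"
    by (simp add: euclidean_product_topology compactin_euclidean_iff)
  moreover have "vecs_on B \<inter> {w. (\<Sum>t\<in>B. (w t)\<^sup>2) = 1} \<subseteq> PiE UNIV S"
  proof
    fix w assume w: "w \<in> vecs_on B \<inter> {w. (\<Sum>t\<in>B. (w t)\<^sup>2) = 1}"
    have "(w t)\<^sup>2 \<le> 1" if "t \<in> B" for t
      using w member_le_sum[OF that, of "\<lambda>t. (w t)\<^sup>2", OF _ assms] by simp
    then show "w \<in> PiE UNIV S"
      using w by (auto simp: PiE_iff S_def vecs_on_def abs_square_le_1 abs_le_iff)
  qed
  moreover have "closed (vecs_on B \<inter> {w. (\<Sum>t\<in>B. (w t)\<^sup>2) = 1})"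
  proof -
    have "vecs_on B = (\<Inter>t\<in>-B. {w. w t = 0})"
      by (auto simp: vecs_on_def)
    then show ?thesis
      by (auto intro!: closed_Int closed_INT closed_Collect_eq continuous_intros
          continuous_on_product_coordinates)
  qed
  ultimately show ?thesis
    by (metis compact_Int_closed inf.absorb_iff2)
qed

lemma linear_coeff_zero_if_quadratic_nonneg:
  fixes L c :: real
  assumes "\<And>s. 0 \<le> 2 * s * L + s\<^sup>2 * c"
  shows "L = 0"
proof (rule ccontr)
  assume "L \<noteq> 0"
  define a where "a = \<bar>c\<bar> + 1"
  have "0 < a" "c < 2 * a"
    by (auto simp: a_def)
  define s where "s = - L / a"
  have "(2 * s * L + s\<^sup>2 * c) * a\<^sup>2 = L\<^sup>2 * (c - 2 * a)"
    using \<open>0 < a\<close> by (simp add: s_def field_simps power2_eq_square)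
  also have "\<dots> < 0"
    using \<open>L \<noteq> 0\<close> \<open>c < 2 * a\<close> by (intro mult_pos_neg) auto
  finally show False
    using assms[of s] by (simp add: mult_less_0_iff)
qed

lemma pencil_eigvec_if_stationary:
  assumes "finite B"
    and ge: "\<And>u. u \<in> vecs_on B \<Longrightarrow>
               \<alpha> * (gram_form X B e u + diag_form B \<beta> u) \<le> gram_form X B e u"
    and eq: "gram_form X B e w = \<alpha> * (gram_form X B e w + diag_form B \<beta> w)"
    and "\<alpha> < 1" and w: "w \<in> vecs_on B" "\<exists>t\<in>B. w t \<noteq> 0"
  shows "pencil_eigvec X B e \<beta> (\<alpha> / (1 - \<alpha>)) w"
proof -
  have "(\<Sum>x\<in>X. e t0 x * lin_comb B e w x) = \<alpha> / (1 - \<alpha>) * \<beta> t0 * w t0"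
    if "t0 \<in> B" for t0
  proof -
    define u where "u = (\<lambda>t. if t = t0 then 1 else (0::real))"
    define Q where "Q = (\<lambda>v. (1 - \<alpha>) * gram_form X B e v - \<alpha> * diag_form B \<beta> v)"
    define L where "L = (1 - \<alpha>) * (\<Sum>x\<in>X. lin_comb B e w x * lin_comb B e u x)
                         - \<alpha> * (\<Sum>t\<in>B. \<beta> t * w t * u t)"
    \<comment> \<open>\<open>Q \<ge> 0\<close> on \<open>vecs_on B\<close> and \<open>Q w = 0\<close>, so \<open>w\<close> is a critical point of \<open>Q\<close>.\<close>
    have "0 \<le> Q (\<lambda>t. w t + s * u t)" for s
      using ge[of "\<lambda>t. w t + s * u t"] w that by (auto simp: Q_def u_def vecs_on_def algebra_simps)
    moreover have "Q (\<lambda>t. w t + s * u t) = Q w + 2 * s * L + s\<^sup>2 * Q u" for s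
      by (simp add: Q_def L_def gram_form_add_scaled diag_form_add_scaled algebra_simps)
    moreover have "Q w = 0"
      using eq by (simp add: Q_def algebra_simps)
    ultimately have "0 \<le> 2 * s * L + s\<^sup>2 * Q u" for s
      by (metis add_0)
    then have "L = 0"
      by (rule linear_coeff_zero_if_quadratic_nonneg)
    moreover have "(\<Sum>t\<in>B. \<beta> t * w t * u t) = \<beta> t0 * w t0"
      using \<open>finite B\<close> that by (simp add: u_def if_distrib cong: if_cong)
    moreover have "(\<Sum>x\<in>X. lin_comb B e w x * lin_comb B e u x)
        = (\<Sum>x\<in>X. e t0 x * lin_comb B e w x)"
      unfolding u_def lin_comb_delta[OF \<open>finite B\<close> that] by (simp add: mult.commute)
    ultimately show ?thesis
      using \<open>\<alpha> < 1\<close> by (simp add: L_def field_simps)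
  qed
  with w show ?thesis
    by (simp add: pencil_eigvec_def)
qed

lemma continuous_on_gram_form: "continuous_on UNIV (gram_form X B e)"
  unfolding gram_form_def lin_comb_def
  by (intro continuous_intros continuous_on_product_coordinates)

lemma continuous_on_diag_form: "continuous_on UNIV (diag_form B \<beta>)"
  unfolding diag_form_def
  by (intro continuous_intros continuous_on_product_coordinates)

lemma exists_unit_multiple:
  assumes "finite B" "u \<in> vecs_on B" "\<exists>t\<in>B. u t \<noteq> 0"
  obtains c where "c \<noteq> 0" "(\<lambda>t. c * u t) \<in> vecs_on B \<inter> {w. (\<Sum>t\<in>B. (w t)\<^sup>2) = 1}"
proof
  have sq_sum_pos: "0 < (\<Sum>t\<in>B. (u t)\<^sup>2)"
    using assms by (auto intro: sum_pos2)
  then show "1 / sqrt (\<Sum>t\<in>B. (u t)\<^sup>2) \<noteq> 0"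
    by simp
  show "(\<lambda>t. 1 / sqrt (\<Sum>t\<in>B. (u t)\<^sup>2) * u t) \<in> vecs_on B \<inter> {w. (\<Sum>t\<in>B. (w t)\<^sup>2) = 1}"
    using assms(2) sq_sum_pos
    by (simp add: vecs_on_def power_divide flip: sum_divide_distrib)
qed

lemma exists_min_pencil_ratio:
  assumes "finite B" "B \<noteq> {}"
    and pos: "\<And>w. w \<in> vecs_on B \<Longrightarrow> \<exists>t\<in>B. w t \<noteq> 0 \<Longrightarrow>
                0 < gram_form X B e w + diag_form B \<beta> w"
  obtains \<alpha> w where
    "\<And>u. u \<in> vecs_on B \<Longrightarrow> \<alpha> * (gram_form X B e u + diag_form B \<beta> u) \<le> gram_form X B e u"
    "w \<in> vecs_on B" "\<exists>t\<in>B. w t \<noteq> 0"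
    "gram_form X B e w = \<alpha> * (gram_form X B e w + diag_form B \<beta> w)"
proof -
  define K where "K = vecs_on B \<inter> {w. (\<Sum>t\<in>B. (w t)\<^sup>2) = 1}"
  define f where "f = (\<lambda>w. gram_form X B e w / (gram_form X B e w + diag_form B \<beta> w))"
  have K_nonzero: "\<exists>t\<in>B. w t \<noteq> 0" if "w \<in> K" for w
  proof (rule ccontr)
    assume "\<not> (\<exists>t\<in>B. w t \<noteq> 0)"
    then have "(\<Sum>t\<in>B. (w t)\<^sup>2) = 0"
      by simp
    with that show False
      by (simp add: K_def)
  qed
  obtain t0 where "t0 \<in> B"
    using \<open>B \<noteq> {}\<close> by blast
  moreover have "(\<Sum>t\<in>B. (if t = t0 then 1 else 0 :: real)\<^sup>2) = (\<Sum>t\<in>B. if t = t0 then 1 else 0)"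
    by (rule sum.cong) auto
  ultimately have "(\<lambda>t. if t = t0 then 1 else 0) \<in> K"
    using \<open>finite B\<close> by (simp add: K_def vecs_on_def)
  moreover have "continuous_on K f"
    unfolding f_def using pos K_nonzero
    by (intro continuous_on_divide continuous_on_add
        continuous_on_subset[OF continuous_on_gram_form] continuous_on_subset[OF continuous_on_diag_form])
      (auto simp: K_def, fastforce)
  ultimately obtain w where "w \<in> K" and w_min: "\<And>v. v \<in> K \<Longrightarrow> f w \<le> f v"
    using continuous_attains_inf[OF compact_unit_vecs_on[OF \<open>finite B\<close>, folded K_def]] by blast
  have "f w * (gram_form X B e u + diag_form B \<beta> u) \<le> gram_form X B e u"
    if u: "u \<in> vecs_on B" for u
  proof (cases "\<exists>t\<in>B. u t \<noteq> 0")
    case False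
    then show ?thesis
      by (simp add: gram_form_def diag_form_def lin_comb_def)
  next
    case True
    then obtain c where "c \<noteq> 0" and "(\<lambda>t. c * u t) \<in> K"
      using exists_unit_multiple[OF \<open>finite B\<close> u] unfolding K_def by blast
    then have "f w \<le> f (\<lambda>t. c * u t)"
      using w_min by blast
    also have "\<dots> = f u"
      unfolding f_def gram_form_scale diag_form_scale distrib_left[symmetric]
      using \<open>c \<noteq> 0\<close> by simp
    finally show ?thesis
      using pos[OF u True] by (simp add: f_def pos_le_divide_eq)
  qed
  moreover have "gram_form X B e w = f w * (gram_form X B e w + diag_form B \<beta> w)"
    using pos[of w] \<open>w \<in> K\<close> K_nonzero by (simp add: K_def f_def)
  moreover have "w \<in> vecs_on B"
    using \<open>w \<in> K\<close> by (simp add: K_def)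
  ultimately show ?thesis
    using that K_nonzero[OF \<open>w \<in> K\<close>] by blast
qed

lemma gram_diag_pos_if_pencil_lower_bound:
  assumes "finite X" "finite B" and \<beta>_nonneg: "\<And>t. t \<in> B \<Longrightarrow> 0 \<le> \<beta> t"
    and lower: "\<And>\<mu> v. pencil_eigvec X B e \<beta> \<mu> v \<Longrightarrow> lam \<le> \<mu>"
    and "w \<in> vecs_on B" "\<exists>t\<in>B. w t \<noteq> 0"
  shows "0 < gram_form X B e w + diag_form B \<beta> w"
proof (rule ccontr)
  assume "\<not> ?thesis"
  then have "gram_form X B e w = 0" "diag_form B \<beta> w = 0"
    using gram_form_nonneg[of X B e w] diag_form_nonneg[of B \<beta> w] \<beta>_nonneg by auto
  \<comment> \<open>A common null vector of both forms is an eigenvector for every \<open>\<mu>\<close>, e.g. \<open>lam - 1\<close>.\<close>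
  with assms(1,2) \<beta>_nonneg assms(5,6) have "pencil_eigvec X B e \<beta> (lam - 1) w"
    by (rule pencil_eigvec_if_degenerate)
  then show False
    using lower by fastforce
qed

lemma pencil_rayleigh_bound:
  assumes "finite X" "finite B" and \<beta>_nonneg: "\<And>t. t \<in> B \<Longrightarrow> 0 \<le> \<beta> t"
    and lower: "\<And>\<mu> v. pencil_eigvec X B e \<beta> \<mu> v \<Longrightarrow> lam \<le> \<mu>"
    and "w \<in> vecs_on B"
  shows "lam * diag_form B \<beta> w \<le> gram_form X B e w"
proof (cases "diag_form B \<beta> w = 0")
  case True
  then show ?thesis
    by (simp add: gram_form_nonneg)
next
  case False
  then have diag_pos: "0 < diag_form B \<beta> w"
    using diag_form_nonneg[of B \<beta> w] \<beta>_nonneg by (simp add: order_less_le)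
  then have "B \<noteq> {}"
    by (auto simp: diag_form_def)
  have pos: "0 < gram_form X B e v + diag_form B \<beta> v"
    if "v \<in> vecs_on B" "\<exists>t\<in>B. v t \<noteq> 0" for v
    using assms(1,2) \<beta>_nonneg lower that by (rule gram_diag_pos_if_pencil_lower_bound)
  obtain \<alpha> v where ge: "\<And>u. u \<in> vecs_on B \<Longrightarrow>
        \<alpha> * (gram_form X B e u + diag_form B \<beta> u) \<le> gram_form X B e u"
    and v: "v \<in> vecs_on B" "\<exists>t\<in>B. v t \<noteq> 0"
    and eq: "gram_form X B e v = \<alpha> * (gram_form X B e v + diag_form B \<beta> v)"
    using exists_min_pencil_ratio[OF \<open>finite B\<close> \<open>B \<noteq> {}\<close> pos] by blast
  have w_ge: "\<alpha> * diag_form B \<beta> w \<le> (1 - \<alpha>) * gram_form X B e w"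
    using ge[OF \<open>w \<in> vecs_on B\<close>] by (simp add: algebra_simps)
  have "\<alpha> < 1"
  proof (rule ccontr)
    assume "\<not> \<alpha> < 1"
    then have "diag_form B \<beta> w \<le> \<alpha> * diag_form B \<beta> w" "(1 - \<alpha>) * gram_form X B e w \<le> 0"
      using diag_pos gram_form_nonneg[of X B e w] by (auto intro: mult_nonpos_nonneg)
    with w_ge diag_pos show False
      by linarith
  qed
  have "lam \<le> \<alpha> / (1 - \<alpha>)"
    using lower pencil_eigvec_if_stationary[OF \<open>finite B\<close> ge eq \<open>\<alpha> < 1\<close> v] by blast
  then have "lam * diag_form B \<beta> w \<le> \<alpha> / (1 - \<alpha>) * diag_form B \<beta> w"
    using diag_pos by (intro mult_right_mono) auto
  also have "\<dots> \<le> gram_form X B e w"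
    using w_ge \<open>\<alpha> < 1\<close> by (simp add: field_simps)
  finally show ?thesis .
qed

lemma gram_row_eq_lin_comb:
  "(\<Sum>t'\<in>B. (\<Sum>x\<in>X. e t x * e t' x) * w t') = (\<Sum>x\<in>X. e t x * lin_comb B e w x)"
  by (simp add: lin_comb_def sum_distrib_left sum_distrib_right mult_ac sum.swap[of _ B X])

definition gw_weight :: "(real^'n) set \<Rightarrow> ('n::finite) term \<Rightarrow> real" where
  "gw_weight X t = (gw_norm X (monom t))\<^sup>2"

lemma gw_weight_nonneg: "0 \<le> gw_weight X t"
  by (simp add: gw_weight_def)

lemma poly_span_eq_vecs_on: "poly_span Os = vecs_on Os"
  by (auto simp: poly_span_def vecs_on_def)

lemma poly_eval_eq_lin_comb:
  assumes "finite B" "h \<in> vecs_on B"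
  shows "poly_eval h x = lin_comb B term_eval h x"
  unfolding poly_eval_def lin_comb_def
  by (rule sum.mono_neutral_left) (use assms in \<open>auto simp: poly_support_def vecs_on_def\<close>)

lemma eval_norm_eq_gram_form:
  "finite B \<Longrightarrow> h \<in> vecs_on B \<Longrightarrow> eval_norm X h = sqrt (gram_form X B term_eval h)"
  by (simp add: eval_norm_def gram_form_def poly_eval_eq_lin_comb)

lemma gw_norm_eq_diag_form:
  assumes "finite B" "h \<in> vecs_on B"
  shows "gw_norm X h = sqrt (diag_form B (gw_weight X) h)"
proof -
  have supp: "poly_support (monom t) = {t}" for t
    by (auto simp: poly_support_def monom_def)
  have "gw_weight X t = (term_gnorm X t)\<^sup>2" for t
    unfolding gw_weight_def gw_norm_def supp by (simp add: monom_def)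
  moreover have "(\<Sum>t\<in>poly_support h. (h t)\<^sup>2 * (term_gnorm X t)\<^sup>2)
      = (\<Sum>t\<in>B. (h t)\<^sup>2 * (term_gnorm X t)\<^sup>2)"
    by (rule sum.mono_neutral_left) (use assms in \<open>auto simp: poly_support_def vecs_on_def\<close>)
  ultimately show ?thesis
    by (simp add: gw_norm_def diag_form_def mult.commute)
qed

lemma gen_eigenvalue_iff_pencil_eigvec:
  "gen_eigenvalue X Os b \<mu> \<longleftrightarrow>
     (\<exists>w. pencil_eigvec X (insert b Os) term_eval (gw_weight X) \<mu> w)"
  by (auto simp: gen_eigenvalue_def gen_eig_eq_def pencil_eigvec_def vecs_on_def gw_weight_def
      gram_row_eq_lin_comb)

lemma abm_S2_pencil:
  assumes "abm_S2 X Os b lam v"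
  shows "pencil_eigvec X (insert b Os) term_eval (gw_weight X) lam v"
    and "\<And>\<mu> w. pencil_eigvec X (insert b Os) term_eval (gw_weight X) \<mu> w \<Longrightarrow> lam \<le> \<mu>"
    and "diag_form (insert b Os) (gw_weight X) v = 1"
proof -
  show unit: "diag_form (insert b Os) (gw_weight X) v = 1"
    using assms by (simp add: abm_S2_def diag_form_def gw_weight_def)
  have "\<exists>t\<in>insert b Os. v t \<noteq> 0"
  proof (rule ccontr)
    assume "\<not> (\<exists>t\<in>insert b Os. v t \<noteq> 0)"
    then have "diag_form (insert b Os) (gw_weight X) v = 0"
      by (auto simp: diag_form_def intro!: sum.neutral)
    with unit show False
      by simp
  qed
  then show "pencil_eigvec X (insert b Os) term_eval (gw_weight X) lam v"
    using assms by (auto simp: abm_S2_def gen_eig_eq_def pencil_eigvec_def vecs_on_def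
        gw_weight_def gram_row_eq_lin_comb)
  show "lam \<le> \<mu>" if "pencil_eigvec X (insert b Os) term_eval (gw_weight X) \<mu> w" for \<mu> w
    using assms that by (auto simp: abm_S2_def gen_eigenvalue_iff_pencil_eigvec)
qed

lemma abm_S2_rayleigh:
  assumes "finite X" "finite Os" "abm_S2 X Os b lam v" "h \<in> poly_span (insert b Os)"
  shows "lam * (gw_norm X h)\<^sup>2 \<le> (eval_norm X h)\<^sup>2"
proof -
  have h: "h \<in> vecs_on (insert b Os)"
    using assms(4) by (simp add: poly_span_eq_vecs_on)
  have "lam * diag_form (insert b Os) (gw_weight X) h \<le> gram_form X (insert b Os) term_eval h"
    using assms(1,2) abm_S2_pencil(2)[OF assms(3)] h
    by (intro pencil_rayleigh_bound) (auto simp: gw_weight_nonneg)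
  moreover have "(gw_norm X h)\<^sup>2 = diag_form (insert b Os) (gw_weight X) h"
    using assms(2) gw_norm_eq_diag_form[OF _ h] diag_form_nonneg[of "insert b Os" "gw_weight X" h]
    by (simp add: gw_weight_nonneg)
  moreover have "(eval_norm X h)\<^sup>2 = gram_form X (insert b Os) term_eval h"
    using assms(2) eval_norm_eq_gram_form[OF _ h] by (simp add: gram_form_nonneg)
  ultimately show ?thesis
    by simp
qed

lemma abm_S2_norms:
  assumes "finite Os" "abm_S2 X Os b lam v"
  shows "gw_norm X v = 1" and "eval_norm X v = sqrt lam"
proof -
  have v: "v \<in> vecs_on (insert b Os)"
    using abm_S2_pencil(1)[OF assms(2)] by (simp add: pencil_eigvec_def)
  show "gw_norm X v = 1"
    using gw_norm_eq_diag_form[OF _ v] assms abm_S2_pencil(3) by simp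
  show "eval_norm X v = sqrt lam"
    using eval_norm_eq_gram_form[OF _ v] assms(1)
      gram_form_pencil_eigvec[OF abm_S2_pencil(1)[OF assms(2)]] abm_S2_pencil(3)[OF assms(2)]
    by simp
qed

lemma abm_reachable_finite:
  "abm_reachable X eps ordl (d, L, Os, G, stp) \<Longrightarrow> finite Os"
  unfolding abm_reachable_def
proof (induction "(d, L, Os, G, stp)" arbitrary: d L Os G stp rule: rtranclp_induct)
  case base
  then show ?case
    by (auto simp: abm_init_def)
next
  case (step s)
  from step(2) show ?case
    by cases (auto dest: step(3))
qed

lemma abm_reachable_no_unit_vanishing:
  assumes "finite X" and "abm_reachable X eps ordl (d, L, Os, G, stp)"
    and "h \<in> poly_span Os" "gw_norm X h = 1"
  shows "\<not> approx_vanishing X eps h"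
  using assms(2-) unfolding abm_reachable_def
proof (induction "(d, L, Os, G, stp)" arbitrary: d L Os G stp h rule: rtranclp_induct)
  case base
  then have "poly_support h \<subseteq> {one_term}"
    by (auto simp: abm_init_def poly_span_def poly_support_def)
  then have "gw_norm X h = 0"
    by (auto simp: gw_norm_def term_gnorm_def tdeg_def one_term_def subset_singleton_iff)
  with base show ?case
    by simp
next
  case (step s)
  from step(2) show ?case
  proof cases
    case next_degree
    then show ?thesis
      using step(3) step.prems by blast
  next
    case stop
    then show ?thesis
      using step(3) step.prems by blast
  next
    case (process b L' Os' lam v G')
    show ?thesis
    proof (cases "sqrt lam \<le> eps")
      case True
      then show ?thesis
        using step(3)[OF process(1)] step.prems process(3) by simp
    next
      case False
      have "finite Os'"
        using step(1) process(1) abm_reachable_finite by (auto simp: abm_reachable_def)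
      then have "lam \<le> (eval_norm X h)\<^sup>2"
        using abm_S2_rayleigh[OF \<open>finite X\<close> _ process(8), of h] step.prems False process(3)
        by simp
      then have "sqrt lam \<le> eval_norm X h"
        by (rule real_le_lsqrt[rotated]) (simp add: eval_norm_def sum_nonneg)
      then show ?thesis
        using False by (simp add: approx_vanishing_def)
    qed
  qed
qed

text \<open>The term ordering only decides which border term is processed next, and the invariants
  hold for every order of processing.\<close>

theorem mainTheorem3:
  fixes X :: "(real^'n) set" and eps :: real and ordl :: "('n::finite) term \<Rightarrow> 'n term \<Rightarrow> bool"
  assumes "finite X" and "eps \<ge> 0"
    and "term_ordering ordl" and "degree_compatible ordl"
  shows
    "(\<forall>d L Os G stp. abm_reachable X eps ordl (d, L, Os, G, stp) \<longrightarrow>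
        (\<forall>h\<in>poly_span Os. gw_norm X h = 1 \<longrightarrow> \<not> approx_vanishing X eps h))
     \<and>
     (\<forall>d L Os G b lam v. abm_reachable X eps ordl (d, L, Os, G, False) \<longrightarrow>
        b \<in> L \<longrightarrow> (\<forall>b'\<in>L. b' \<noteq> b \<longrightarrow> ordl b b') \<longrightarrow>
        abm_S2 X Os b lam v \<longrightarrow> sqrt lam \<le> eps \<longrightarrow>
        gw_norm X v = 1 \<and> v b \<noteq> 0 \<and> eval_norm X v \<le> sqrt lam)"
proof (intro conjI allI impI ballI)
  show "\<not> approx_vanishing X eps h"
    if "abm_reachable X eps ordl (d, L, Os, G, stp)" "h \<in> poly_span Os" "gw_norm X h = 1"
    for d L Os G stp h
    using abm_reachable_no_unit_vanishing[OF \<open>finite X\<close> that] .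
next
  fix d L Os G b lam v
  assume reach: "abm_reachable X eps ordl (d, L, Os, G, False)"
    and S2: "abm_S2 X Os b lam v" and "sqrt lam \<le> eps"
  have "finite Os"
    using reach by (rule abm_reachable_finite)
  show gw: "gw_norm X v = 1" and "eval_norm X v \<le> sqrt lam"
    using abm_S2_norms[OF \<open>finite Os\<close> S2] by simp_all
  show "v b \<noteq> 0"
  proof
    assume "v b = 0"
    then have "v \<in> poly_span Os"
      using abm_S2_pencil(1)[OF S2] by (auto simp: pencil_eigvec_def vecs_on_def poly_span_def)
    then show False
      using abm_reachable_no_unit_vanishing[OF \<open>finite X\<close> reach _ gw] abm_S2_norms[OF \<open>finite Os\<close> S2]
        \<open>sqrt lam \<le> eps\<close> by (simp add: approx_vanishing_def)
  qed
qed

end
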